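(* Let $\epsilon>0$, let $s\ge 2$ be an integer, and let $0<p<\frac{s-1}{s}$. Then there exists $t=t(\epsilon,s,p)$ with the following property. For every $n$ and every $s$-wise $t$-intersecting family $\mathcal F\subseteq 2^{[n]}$, we have $\mu_p(\mathcal F)<\epsilon$.
   Context: Here $[n]=\{0,1,\dots,n-1\}$ and $2^{[n]}$ is the set of all subsets of $[n]$. A family $\mathcal F\subseteq 2^{[n]}$ is $s$-wise $t$-intersecting if $|F_1\cap\cdots\cap F_s|\ge t$ for every $F_1,\dots,F_s\in\mathcal F$. For $F\subseteq[n]$ define $\mu_p(F)=p^{|F|}(1-p)^{n-|F|}$, and for a family define $\mu_p(\mathcal F)=\sum_{F\in\mathcal F}\mu_p(F)$. Equivalently, $\mu_p(\mathcal F)$ is the probability that a random subset of $[n]$, containing each element independently with probability $p$, lies in $\mathcal F$. *)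

theory Defs
  imports Complex_Main
begin

text \<open>Ground set [n] = {0,..,n-1}; families are sets of subsets of {..<n}.\<close>

definition s_wise_t_intersecting :: "nat \<Rightarrow> nat \<Rightarrow> nat set set \<Rightarrow> bool" where
  "s_wise_t_intersecting s t \<F> \<longleftrightarrow>
     (\<forall>F. (\<forall>i<s. F i \<in> \<F>) \<longrightarrow> t \<le> card (\<Inter>i<s. F i))"

definition mu_p_set :: "nat \<Rightarrow> real \<Rightarrow> nat set \<Rightarrow> real" where
  "mu_p_set n p A = p ^ card A * (1 - p) ^ (n - card A)"

definition mu_p :: "nat \<Rightarrow> real \<Rightarrow> nat set set \<Rightarrow> real" where
  "mu_p n p \<F> = (\<Sum>A\<in>\<F>. mu_p_set n p A)"

end

(* Shifting: the compressions S_ij (i < j) preserve mu_p and the s-wise t-intersecting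
   property and strictly decrease the total element sum, so we may assume F shifted.
   In a shifted s-wise t-intersecting family every member A has a prefix [m] with
   s |A \<inter> [m]| \<ge> (s - 1) m + t.  Otherwise, for each residue k mod s, the set C_k of
   numbers that are below t - 1 or not congruent to t - 1 + k has prefix counts dominating
   those of A, so the shifted family contains a subset of every C_k; but these s sets meet
   in fewer than t points.
   Now fix y > 1 with p y^s + 1 - p < y^(s-1), which exists because p < (s - 1)/s.
   Bounding the indicator of such a prefix by y^(s |A \<inter> [m]| - (s - 1) m - t) and summing
   over m gives mu_p(F) \<le> y^(-t) \<Sum>_m c^m with c = (p y^s + 1 - p) / y^(s-1) < 1,
   which is below \<epsilon> once t is large. *)

theory Submission
  imports Defs
begin

section \<open>Shifting\<close>

definition shift_set :: "nat \<Rightarrow> nat \<Rightarrow> nat set set \<Rightarrow> nat set \<Rightarrow> nat set" where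
  "shift_set i j F A =
     (if j \<in> A \<and> i \<notin> A \<and> insert i (A - {j}) \<notin> F then insert i (A - {j}) else A)"

definition shift_family :: "nat \<Rightarrow> nat \<Rightarrow> nat set set \<Rightarrow> nat set set" where
  "shift_family i j F = shift_set i j F ` F"

definition shifted :: "nat set set \<Rightarrow> bool" where
  "shifted F \<longleftrightarrow>
     (\<forall>A\<in>F. \<forall>i j. i < j \<longrightarrow> j \<in> A \<longrightarrow> i \<notin> A \<longrightarrow> insert i (A - {j}) \<in> F)"

lemma card_insert_Diff_swap:
  assumes "finite A" "j \<in> A" "i \<notin> A"
  shows "card (insert i (A - {j})) = card A"
  using assms card_Suc_Diff1 by fastforce

lemma mem_shift_set_iff: "x \<noteq> i \<Longrightarrow> x \<noteq> j \<Longrightarrow> x \<in> shift_set i j F A \<longleftrightarrow> x \<in> A"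
  by (simp add: shift_set_def)

lemma shift_set_eq_if_mem: "i \<in> A \<Longrightarrow> shift_set i j F A = A"
  by (simp add: shift_set_def)

lemma finite_shift_set: "finite A \<Longrightarrow> finite (shift_set i j F A)"
  by (simp add: shift_set_def)

lemma shift_set_moved:
  assumes "shift_set i j F A \<noteq> A"
  shows "j \<in> A" "i \<notin> A" "insert i (A - {j}) \<notin> F" "shift_set i j F A = insert i (A - {j})"
  using assms by (auto simp: shift_set_def split: if_splits)

lemma card_shift_set: "finite A \<Longrightarrow> card (shift_set i j F A) = card A"
  using shift_set_moved card_insert_Diff_swap by metis

lemma inj_on_shift_set: "i \<noteq> j \<Longrightarrow> inj_on (shift_set i j F) F"
  by (auto simp: inj_on_def shift_set_def split: if_splits)

lemma shift_family_subset_Pow: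
  "F \<subseteq> Pow {..<n} \<Longrightarrow> i < n \<Longrightarrow> shift_family i j F \<subseteq> Pow {..<n}"
  by (auto simp: shift_family_def shift_set_def)

lemma mu_p_shift_family:
  "\<forall>A\<in>F. finite A \<Longrightarrow> i \<noteq> j \<Longrightarrow> mu_p n p (shift_family i j F) = mu_p n p F"
  by (simp add: mu_p_def shift_family_def sum.reindex inj_on_shift_set mu_p_set_def card_shift_set)

lemma Sum_shift_set_less:
  assumes "finite A" "i < j" "shift_set i j F A \<noteq> A"
  shows "\<Sum>(shift_set i j F A) < \<Sum>A"
  using assms shift_set_moved[OF assms(3)] by (simp add: sum.remove[of A j])

lemma shift_family_weight_less:
  assumes "finite F" "\<forall>A\<in>F. finite A" "i < j" "shift_family i j F \<noteq> F"
  shows "(\<Sum>A\<in>shift_family i j F. \<Sum>A) < (\<Sum>A\<in>F. \<Sum>A)"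
proof -
  have "(\<Sum>A\<in>shift_family i j F. \<Sum>A) = (\<Sum>A\<in>F. \<Sum>(shift_set i j F A))"
    using assms(3) by (simp add: shift_family_def sum.reindex inj_on_shift_set)
  also have "\<dots> < (\<Sum>A\<in>F. \<Sum>A)"
  proof (rule sum_strict_mono_ex1[OF assms(1)])
    show "\<forall>A\<in>F. \<Sum>(shift_set i j F A) \<le> \<Sum>A"
      using assms Sum_shift_set_less by (metis order.refl less_imp_le)
    obtain A where "A \<in> F" "shift_set i j F A \<noteq> A"
      using assms(4) image_cong[OF refl, of F "shift_set i j F" id]
      by (force simp: shift_family_def)
    then show "\<exists>A\<in>F. \<Sum>(shift_set i j F A) < \<Sum>A"
      using assms Sum_shift_set_less by blast
  qed
  finally show ?thesis .
qed

(* Replacing A l by insert i (A l - {j}), which lies in F because A l was not shifted,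
   gives s members of F whose intersection avoids both i and j. *)
lemma card_Inter_Diff_pair_ge:
  assumes sw: "s_wise_t_intersecting s t F" and A: "\<forall>k<s. A k \<in> F"
    and m: "m < s" "j \<in> A m" "j \<notin> shift_set i j F (A m)" "finite (A m)"
    and l: "l < s" "j \<in> A l" "i \<notin> shift_set i j F (A l)"
  shows "t \<le> card ((\<Inter>k<s. A k) - {i, j})"
proof -
  have moved: "shift_set i j F (A m) \<noteq> A m" using m by auto
  have "i \<notin> A m" "i \<in> shift_set i j F (A m)"
    using shift_set_moved[OF moved] by auto
  moreover have "shift_set i j F (A l) = A l"
    using l shift_set_moved(4) by fastforce
  ultimately have "l \<noteq> m" "i \<notin> A l" and swapped_in: "insert i (A l - {j}) \<in> F"
    using l by (auto simp: shift_set_def split: if_splits)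
  define D where "D = A(l := insert i (A l - {j}))"
  have "\<forall>k<s. D k \<in> F" using A swapped_in by (simp add: D_def)
  then have "t \<le> card (\<Inter>k<s. D k)" using sw by (simp add: s_wise_t_intersecting_def)
  also have "\<dots> \<le> card ((\<Inter>k<s. A k) - {i, j})"
  proof (rule card_mono)
    show "finite ((\<Inter>k<s. A k) - {i, j})" using m by (meson Diff_subset INT_lower lessThan_iff finite_subset)
    show "(\<Inter>k<s. D k) \<subseteq> (\<Inter>k<s. A k) - {i, j}"
      using m l \<open>l \<noteq> m\<close> \<open>i \<notin> A m\<close> by (force simp: D_def)
  qed
  finally show ?thesis .
qed

lemma Inter_Diff_pair_subset_Inter_shift_set:
  "(\<Inter>k<s. A k) - {i, j} \<subseteq> (\<Inter>k<s. shift_set i j F (A k))"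
proof
  fix x assume "x \<in> (\<Inter>k<s. A k) - {i, j}"
  then show "x \<in> (\<Inter>k<s. shift_set i j F (A k))" by (simp add: mem_shift_set_iff)
qed

lemma card_Inter_shift_set_ge:
  assumes sw: "s_wise_t_intersecting s t F" and A: "\<forall>k<s. A k \<in> F"
    and fin: "\<forall>A\<in>F. finite A" and "i \<noteq> j"
  shows "t \<le> card (\<Inter>k<s. shift_set i j F (A k))"
proof -
  define IA where "IA = (\<Inter>k<s. A k)"
  define IB where "IB = (\<Inter>k<s. shift_set i j F (A k))"
  have "t \<le> card IA" using sw A by (simp add: s_wise_t_intersecting_def IA_def)
  have rest: "IA - {i, j} \<subseteq> IB"
    unfolding IA_def IB_def by (rule Inter_Diff_pair_subset_Inter_shift_set)
  have "t \<le> card IB"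
  proof (cases "i \<in> IA")
    case True
    then have "IB = IA" by (simp add: IA_def IB_def shift_set_eq_if_mem)
    with \<open>t \<le> card IA\<close> show ?thesis by simp
  next
    case False
    then obtain k where "k < s" by (auto simp: IA_def)
    then have "IA \<subseteq> A k" "IB \<subseteq> shift_set i j F (A k)" "finite (A k)"
      using A fin by (auto simp: IA_def IB_def)
    then have "finite IA" "finite IB" by (auto intro: finite_subset finite_shift_set)
    consider "IA \<subseteq> IB" | "j \<in> IA" "i \<in> IB" | "j \<in> IA" "i \<notin> IB" "j \<notin> IB"
      using False rest by auto
    then show ?thesis
    proof cases
      case 1
      then have "card IA \<le> card IB" by (rule card_mono[OF \<open>finite IB\<close>])
      with \<open>t \<le> card IA\<close> show ?thesis by linarith
    next
      case 2
      then have "card IA = card (insert i (IA - {j}))"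
        using card_insert_Diff_swap[OF \<open>finite IA\<close> _ False] by presburger
      also have "\<dots> \<le> card IB" using 2 False rest by (intro card_mono \<open>finite IB\<close>) auto
      finally show ?thesis using \<open>t \<le> card IA\<close> by linarith
    next
      case 3
      then obtain m l where m: "m < s" "j \<notin> shift_set i j F (A m)"
        and l: "l < s" "i \<notin> shift_set i j F (A l)"
        by (auto simp: IB_def)
      moreover have "j \<in> A m" "j \<in> A l" using 3 m l by (auto simp: IA_def)
      ultimately have "t \<le> card (IA - {i, j})"
        unfolding IA_def using card_Inter_Diff_pair_ge[OF sw A] A fin by blast
      also have "\<dots> \<le> card IB" using rest by (intro card_mono \<open>finite IB\<close>)
      finally show ?thesis .
    qed
  qed
  then show ?thesis by (simp add: IB_def)
qed

lemma s_wise_t_intersecting_shift_family: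
  assumes "s_wise_t_intersecting s t F" "\<forall>A\<in>F. finite A" "i \<noteq> j"
  shows "s_wise_t_intersecting s t (shift_family i j F)"
  unfolding s_wise_t_intersecting_def
proof (intro allI impI)
  fix B assume "\<forall>k<s. B k \<in> shift_family i j F"
  then have "\<forall>k. \<exists>A. k < s \<longrightarrow> A \<in> F \<and> B k = shift_set i j F A"
    by (auto simp: shift_family_def)
  then obtain A where "\<forall>k<s. A k \<in> F \<and> B k = shift_set i j F (A k)"
    by metis
  then show "t \<le> card (\<Inter>k<s. B k)"
    using card_Inter_shift_set_ge[OF assms(1) _ assms(2,3), of A] by simp
qed

lemma ex_shifted_family:
  assumes "F \<subseteq> Pow {..<n}" "s_wise_t_intersecting s t F"
  shows "\<exists>G. G \<subseteq> Pow {..<n} \<and> s_wise_t_intersecting s t G \<and> mu_p n p G = mu_p n p F \<and> shifted G"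
  using assms
proof (induction "\<Sum>A\<in>F. \<Sum>A" arbitrary: F rule: less_induct)
  case less
  show ?case
  proof (cases "shifted F")
    case True
    then show ?thesis using less.prems by blast
  next
    case False
    then obtain A i j where A: "A \<in> F" "i < j" "j \<in> A" "i \<notin> A" "insert i (A - {j}) \<notin> F"
      unfolding shifted_def by blast
    have fin: "finite F" "\<forall>A\<in>F. finite A"
      using less.prems(1) by (auto intro: finite_subset)
    have "insert i (A - {j}) \<in> shift_family i j F"
      using A by (force simp: shift_family_def shift_set_def)
    then have "shift_family i j F \<noteq> F" using A(5) by blast
    moreover have "j < n" using A less.prems(1) by blast
    then have "shift_family i j F \<subseteq> Pow {..<n}"
      using A(2) less.prems(1) by (intro shift_family_subset_Pow) auto
    moreover have "s_wise_t_intersecting s t (shift_family i j F)"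
      using s_wise_t_intersecting_shift_family[OF less.prems(2) fin(2)] A(2) by simp
    ultimately obtain G where "G \<subseteq> Pow {..<n}" "s_wise_t_intersecting s t G" "shifted G"
        "mu_p n p G = mu_p n p (shift_family i j F)"
      using less.hyps[OF shift_family_weight_less[OF fin A(2)]] by blast
    then show ?thesis using mu_p_shift_family[OF fin(2)] A(2) by auto
  qed
qed

section \<open>Prefix domination in shifted families\<close>

lemma ex_card_Int_lessThan_eq:
  fixes C :: "nat set"
  assumes "r \<le> card (C \<inter> {..<M})"
  shows "\<exists>N. card (C \<inter> {..<N}) = r"
  using assms
proof (induction M)
  case 0
  then show ?case by (intro exI[of _ 0]) simp
next
  case (Suc M)
  have "card (C \<inter> {..<Suc M}) \<le> Suc (card (C \<inter> {..<M}))"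
    by (simp add: lessThan_Suc Int_insert_right card_insert_if)
  show ?case
  proof (cases "r \<le> card (C \<inter> {..<M})")
    case True
    with Suc.IH show ?thesis .
  next
    case False
    with Suc.prems \<open>card (C \<inter> {..<Suc M}) \<le> _\<close> have "card (C \<inter> {..<Suc M}) = r" by linarith
    then show ?thesis ..
  qed
qed

lemma dominated_ex_swap:
  fixes A B :: "nat set"
  assumes fin: "finite A" "finite B" and "card B = card A" "A \<noteq> B"
    and dom: "\<forall>m. card (A \<inter> {..<m}) \<le> card (B \<inter> {..<m})"
  obtains i j where "i < j" "i \<in> B - A" "j \<in> A - B"
    "\<forall>m. card (insert i (A - {j}) \<inter> {..<m}) \<le> card (B \<inter> {..<m})"
proof -
  have "A - B \<noteq> {}" "B - A \<noteq> {}"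
    using assms card_subset_eq by (metis Diff_eq_empty_iff)+
  define i where "i = Min (B - A)"
  define j where "j = Min (A - B)"
  have i: "i \<in> B - A" "\<And>x. x \<in> B - A \<Longrightarrow> i \<le> x"
    using Min_in[OF finite_Diff[OF fin(2)] \<open>B - A \<noteq> {}\<close>] Min_le[OF finite_Diff[OF fin(2)]]
    unfolding i_def by blast+
  have j: "j \<in> A - B" "\<And>x. x \<in> A - B \<Longrightarrow> j \<le> x"
    using Min_in[OF finite_Diff[OF fin(1)] \<open>A - B \<noteq> {}\<close>] Min_le[OF finite_Diff[OF fin(1)]]
    unfolding j_def by blast+
  have "i < j"
  proof (rule ccontr)
    assume "\<not> i < j"
    with i j have "j < i" by (metis DiffD1 DiffD2 linorder_neqE_nat)
    with i j have "B \<inter> {..<Suc j} \<subseteq> A \<inter> {..<Suc j} - {j}"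
      by (auto simp: less_Suc_eq_le) (meson DiffI le_trans not_le)
    then have "card (B \<inter> {..<Suc j}) \<le> card (A \<inter> {..<Suc j} - {j})"
      by (simp add: card_mono)
    also have "\<dots> < card (A \<inter> {..<Suc j})"
      using j fin by (intro card_Diff1_less) auto
    finally show False using dom by (meson not_le)
  qed
  have "card (insert i (A - {j}) \<inter> {..<m}) \<le> card (B \<inter> {..<m})" for m
  proof (cases "m \<le> j")
    case True
    with i j have "insert i (A - {j}) \<inter> {..<m} \<subseteq> B \<inter> {..<m}"
      by auto (meson DiffI le_trans not_le)
    then show ?thesis using fin by (simp add: card_mono)
  next
    case False
    with \<open>i < j\<close> have "insert i (A - {j}) \<inter> {..<m} = insert i (A \<inter> {..<m} - {j})"
      by auto
    also have "card \<dots> = card (A \<inter> {..<m})"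
      using i j False fin by (intro card_insert_Diff_swap) auto
    finally show ?thesis using dom by simp
  qed
  with \<open>i < j\<close> i j that show ?thesis by blast
qed

lemma shifted_mem_if_dominated:
  assumes sh: "shifted G" and "A \<in> G" "finite A" "finite B" "card B = card A"
    and "\<forall>m. card (A \<inter> {..<m}) \<le> card (B \<inter> {..<m})"
  shows "B \<in> G"
  using assms(2-)
proof (induction "card (A - B)" arbitrary: A rule: less_induct)
  case less
  show ?case
  proof (cases "A = B")
    case True
    with less.prems show ?thesis by simp
  next
    case False
    from dominated_ex_swap[OF less.prems(2,3,4) False less.prems(5)]
    obtain i j where ij: "i < j" "i \<in> B - A" "j \<in> A - B"
      and dom: "\<forall>m. card (insert i (A - {j}) \<inter> {..<m}) \<le> card (B \<inter> {..<m})" .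
    have "insert i (A - {j}) - B = (A - B) - {j}" using ij by auto
    then have "card (insert i (A - {j}) - B) < card (A - B)"
      using card_Diff1_less[of "A - B" j] ij less.prems(2) by simp
    moreover have "insert i (A - {j}) \<in> G"
      using sh less.prems(1) ij unfolding shifted_def by blast
    moreover have "finite (insert i (A - {j}))" using less.prems(2) by simp
    moreover have "card B = card (insert i (A - {j}))"
      using less.prems ij by (subst card_insert_Diff_swap) auto
    ultimately show ?thesis by (rule less.hyps[OF _ _ _ less.prems(3) _ dom])
  qed
qed

lemma shifted_ex_mem_subset:
  assumes "shifted G" "A \<in> G" "finite A"
    and dom: "\<forall>m. card (A \<inter> {..<m}) \<le> card (C \<inter> {..<m})"
  shows "\<exists>B\<in>G. B \<subseteq> C"
proof -
  obtain M where "A \<subseteq> {..<M}" using \<open>finite A\<close> finite_nat_set_iff_bounded by auto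
  then have "A \<inter> {..<M} = A" by blast
  then have "card A \<le> card (C \<inter> {..<M})" using dom by metis
  then obtain N where N: "card (C \<inter> {..<N}) = card A" using ex_card_Int_lessThan_eq by blast
  have "card (A \<inter> {..<m}) \<le> card (C \<inter> {..<N} \<inter> {..<m})" for m
  proof (cases "N \<le> m")
    case True
    then have "C \<inter> {..<N} \<inter> {..<m} = C \<inter> {..<N}" by auto
    then show ?thesis using N \<open>finite A\<close> by (simp add: card_mono)
  next
    case False
    then have "C \<inter> {..<N} \<inter> {..<m} = C \<inter> {..<m}" by auto
    then show ?thesis using dom by simp
  qed
  then have "C \<inter> {..<N} \<in> G"
    using shifted_mem_if_dominated[OF assms(1-3) _ N] by blast
  then show ?thesis by blast
qed

lemma card_residue_class_less:
  fixes a b k s :: nat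
  assumes "0 < s"
  shows "s * card {x. a \<le> x \<and> x < b \<and> (x - a) mod s = k} < b - a + s"
proof -
  let ?E = "{x. a \<le> x \<and> x < b \<and> (x - a) mod s = k}"
  have "inj_on (\<lambda>x. (x - a) div s) ?E"
  proof (rule inj_onI)
    fix x y assume x: "x \<in> ?E" and y: "y \<in> ?E" and "(x - a) div s = (y - a) div s"
    moreover have "x - a = s * ((x - a) div s) + k" "y - a = s * ((y - a) div s) + k"
      using x y mult_div_mod_eq[of s "x - a"] mult_div_mod_eq[of s "y - a"] by simp_all
    ultimately show "x = y" using x y eq_diff_iff[of a x y] by simp
  qed
  moreover have "(\<lambda>x. (x - a) div s) ` ?E \<subseteq> {..<(b - a + s - 1) div s}"
  proof
    fix q assume "q \<in> (\<lambda>x. (x - a) div s) ` ?E"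
    then obtain x where "x \<in> ?E" "q = (x - a) div s" by blast
    then have "(x - a + s) div s \<le> (b - a + s - 1) div s" by (intro div_le_mono) auto
    then show "q \<in> {..<(b - a + s - 1) div s}" using \<open>q = _\<close> assms by simp
  qed
  ultimately have "card ?E \<le> card {..<(b - a + s - 1) div s}"
    by (intro card_inj_on_le) auto
  then have "card ?E \<le> (b - a + s - 1) div s" by simp
  then have "s * card ?E \<le> s * ((b - a + s - 1) div s)" by simp
  also have "\<dots> \<le> b - a + s - 1" by simp
  finally show ?thesis using assms by linarith
qed

lemma le_card_Int_lessThan_residue_complement:
  fixes a m r s k :: nat
  assumes "0 < s" "s * a \<le> (s - 1) * m + r" "a \<le> m"
  shows "a \<le> card ({x. x < r \<or> (x - r) mod s \<noteq> k} \<inter> {..<m})"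
proof -
  let ?E = "{x. r \<le> x \<and> x < m \<and> (x - r) mod s = k}"
  have "{x. x < r \<or> (x - r) mod s \<noteq> k} \<inter> {..<m} = {..<m} - ?E" by auto
  moreover have "?E \<subseteq> {..<m}" by auto
  ultimately have card_eq: "card ({x. x < r \<or> (x - r) mod s \<noteq> k} \<inter> {..<m}) = m - card ?E"
    by (simp add: card_Diff_subset finite_subset)
  have E: "s * card ?E < m - r + s" using card_residue_class_less[OF assms(1)] .
  have "a + card ?E \<le> m"
  proof (cases "m \<le> r")
    case True
    then have "card ?E = 0" using E by simp
    with assms(3) show ?thesis by linarith
  next
    case False
    have "(s - 1) * m + m = s * m" using assms(1) by (cases s) auto
    with E False assms(2) have "s * (a + card ?E) < s * Suc m"
      by (simp add: algebra_simps)
    then have "a + card ?E < Suc m" by (rule mult_left_less_imp_less) simp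
    then show ?thesis by simp
  qed
  with card_eq show ?thesis by simp
qed

lemma shifted_s_wise_t_intersecting_dense_prefix:
  assumes sh: "shifted G" and sw: "s_wise_t_intersecting s t G" and "0 < s"
    and A: "A \<in> G" "finite A"
  shows "\<exists>m. (s - 1) * m + t \<le> s * card (A \<inter> {..<m})"
proof (rule ccontr)
  assume "\<not> ?thesis"
  then have sparse: "s * card (A \<inter> {..<m}) < (s - 1) * m + t" for m
    by (simp add: not_le)
  define r where "r = t - 1"
  from sparse[of 0] have "t = Suc r" by (simp add: r_def)
  \<comment> \<open>No x \<ge> r lies in all C k, as x - r falls into some residue class k < s.\<close>
  define C where "C k = {x. x < r \<or> (x - r) mod s \<noteq> k}" for k
  have "\<exists>B\<in>G. B \<subseteq> C k" for k
  proof (rule shifted_ex_mem_subset[OF sh A])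
    show "\<forall>m. card (A \<inter> {..<m}) \<le> card (C k \<inter> {..<m})"
    proof
      fix m
      have "s * card (A \<inter> {..<m}) \<le> (s - 1) * m + r"
        using sparse[of m] \<open>t = Suc r\<close> by simp
      moreover have "card (A \<inter> {..<m}) \<le> m" using card_mono[of "{..<m}" "A \<inter> {..<m}"] by simp
      ultimately show "card (A \<inter> {..<m}) \<le> card (C k \<inter> {..<m})"
        unfolding C_def by (rule le_card_Int_lessThan_residue_complement[OF \<open>0 < s\<close>])
    qed
  qed
  then have "\<forall>k. \<exists>B. B \<in> G \<and> B \<subseteq> C k" by blast
  from choice[OF this] obtain B where B: "\<forall>k. B k \<in> G \<and> B k \<subseteq> C k" by blast
  then have "t \<le> card (\<Inter>k<s. B k)" using sw unfolding s_wise_t_intersecting_def by blast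
  moreover have "(\<Inter>k<s. B k) \<subseteq> {..<r}"
  proof
    fix x assume "x \<in> (\<Inter>k<s. B k)"
    moreover have "(x - r) mod s < s" using \<open>0 < s\<close> by simp
    ultimately have "x \<in> C ((x - r) mod s)" using B by blast
    then show "x \<in> {..<r}" by (simp add: C_def)
  qed
  then have "card (\<Inter>k<s. B k) \<le> card {..<r}" by (intro card_mono) simp_all
  ultimately show False using \<open>t = Suc r\<close> by simp
qed

section \<open>The measure estimate\<close>

lemma mu_p_set_nonneg: "0 \<le> p \<Longrightarrow> p \<le> 1 \<Longrightarrow> 0 \<le> mu_p_set n p A"
  by (simp add: mu_p_set_def)

lemma sum_mu_p_set_power_card_prefix:
  fixes p z :: real
  assumes "m \<le> n"
  shows "(\<Sum>A\<in>Pow {..<n}. mu_p_set n p A * z ^ card (A \<inter> {..<m})) = (p * z + (1 - p)) ^ m"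
proof -
  have power_prefix: "c ^ card (A \<inter> {..<m}) = (\<Prod>x\<in>A. if x < m then c else 1)"
    if "finite A" for A and c :: real
    using that by (simp add: prod.inter_filter[symmetric] Int_def)
  have "(\<Sum>A\<in>Pow {..<n}. mu_p_set n p A * z ^ card (A \<inter> {..<m}))
      = (\<Sum>A\<in>Pow {..<n}. (\<Prod>x\<in>A. p * (if x < m then z else 1)) * (\<Prod>x\<in>{..<n} - A. 1 - p))"
  proof (rule sum.cong[OF refl])
    fix A assume "A \<in> Pow {..<n}"
    then have "finite A" "A \<subseteq> {..<n}" by (auto intro: finite_subset)
    then show "mu_p_set n p A * z ^ card (A \<inter> {..<m})
        = (\<Prod>x\<in>A. p * (if x < m then z else 1)) * (\<Prod>x\<in>{..<n} - A. 1 - p)"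
      by (simp add: mu_p_set_def power_prefix prod.distrib card_Diff_subset)
  qed
  also have "\<dots> = (\<Prod>x\<in>{..<n}. p * (if x < m then z else 1) + (1 - p))"
    by (rule prod_add[symmetric]) simp
  also have "\<dots> = (\<Prod>x\<in>{..<n}. if x < m then p * z + (1 - p) else 1)"
    by (rule prod.cong) auto
  also have "\<dots> = (p * z + (1 - p)) ^ m"
    using power_prefix[of "{..<n}" "p * z + (1 - p)"] Int_absorb1[of "{..<m}" "{..<n}"] assms
    by (simp add: Int_commute)
  finally show ?thesis .
qed

lemma ex_power_gap:
  fixes p :: real
  assumes "p * real s < real s - 1"
  shows "\<exists>y>1. p * y ^ s + (1 - p) < y ^ (s - 1)"
proof -
  have "1 \<le> s" using assms by (cases s) auto
  define h where "h y = y ^ (s - 1) - p * y ^ s - (1 - p)" for y :: real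
  have "(h has_real_derivative (real (s - 1) - p * real s)) (at 1)"
    unfolding h_def by (auto intro!: derivative_eq_intros)
  moreover have "0 < real (s - 1) - p * real s" using assms \<open>1 \<le> s\<close> by (simp add: of_nat_diff)
  ultimately obtain d where "d > 0" and inc: "\<And>e. e > 0 \<Longrightarrow> e < d \<Longrightarrow> h 1 < h (1 + e)"
    using DERIV_pos_inc_right by blast
  then have "h 1 < h (1 + d / 2)" by simp
  moreover have "h 1 = 0" by (simp add: h_def)
  ultimately show ?thesis using \<open>d > 0\<close> by (intro exI[of _ "1 + d / 2"]) (auto simp: h_def)
qed

lemma one_le_sum_prefix_weight:
  fixes y :: real
  assumes A: "A \<subseteq> {..<n}" and y: "1 \<le> y" and m: "(s - 1) * m + t \<le> s * card (A \<inter> {..<m})"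
  shows "1 \<le> (\<Sum>k\<le>n. y ^ (s * card (A \<inter> {..<k})) / (y ^ ((s - 1) * k) * y ^ t))"
proof -
  define m' where "m' = min m n"
  have "A \<inter> {..<m'} = A \<inter> {..<m}" using A by (auto simp: m'_def)
  moreover have "(s - 1) * m' \<le> (s - 1) * m" by (simp add: m'_def)
  then have "(s - 1) * m' + t \<le> s * card (A \<inter> {..<m})" using m by linarith
  ultimately have "(s - 1) * m' + t \<le> s * card (A \<inter> {..<m'})" by simp
  then have "y ^ ((s - 1) * m' + t) \<le> y ^ (s * card (A \<inter> {..<m'}))"
    using y by (rule power_increasing)
  then have "1 \<le> y ^ (s * card (A \<inter> {..<m'})) / (y ^ ((s - 1) * m') * y ^ t)"
    using y by (simp add: power_add)
  also have "\<dots> \<le> (\<Sum>k\<le>n. y ^ (s * card (A \<inter> {..<k})) / (y ^ ((s - 1) * k) * y ^ t))"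
    using y by (intro member_le_sum) (simp_all add: m'_def)
  finally show ?thesis .
qed

lemma mu_p_le_if_dense_prefix:
  fixes p y :: real
  assumes G: "G \<subseteq> Pow {..<n}" and p: "0 \<le> p" "p \<le> 1" and y: "1 \<le> y"
    and dense: "\<forall>A\<in>G. \<exists>m. (s - 1) * m + t \<le> s * card (A \<inter> {..<m})"
  shows "mu_p n p G \<le> (\<Sum>m\<le>n. ((p * y ^ s + (1 - p)) / y ^ (s - 1)) ^ m) / y ^ t"
proof -
  \<comment> \<open>A union bound over the prefix length m, with exponential weights as in Chernoff's bound.\<close>
  define W where "W A = (\<Sum>m\<le>n. y ^ (s * card (A \<inter> {..<m})) / (y ^ ((s - 1) * m) * y ^ t))"
    for A
  have W_ge_1: "1 \<le> W A" if "A \<in> G" for A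
    using dense that G y one_le_sum_prefix_weight[of A n y s _ t] unfolding W_def by blast
  have W_nonneg: "0 \<le> W A" for A
    unfolding W_def using y by (intro sum_nonneg) simp
  have "mu_p n p G \<le> (\<Sum>A\<in>G. mu_p_set n p A * W A)"
    unfolding mu_p_def using W_ge_1 mu_p_set_nonneg[OF p]
    by (intro sum_mono) (metis mult_left_mono mult.right_neutral)
  also have "\<dots> \<le> (\<Sum>A\<in>Pow {..<n}. mu_p_set n p A * W A)"
    using G W_nonneg mu_p_set_nonneg[OF p] by (intro sum_mono2) auto
  also have "\<dots> = (\<Sum>A\<in>Pow {..<n}. \<Sum>m\<le>n.
      mu_p_set n p A * (y ^ s) ^ card (A \<inter> {..<m}) / ((y ^ (s - 1)) ^ m * y ^ t))"
    unfolding W_def by (simp add: sum_distrib_left power_mult)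
  also have "\<dots> = (\<Sum>m\<le>n. \<Sum>A\<in>Pow {..<n}.
      mu_p_set n p A * (y ^ s) ^ card (A \<inter> {..<m}) / ((y ^ (s - 1)) ^ m * y ^ t))"
    by (rule sum.swap)
  also have "\<dots> = (\<Sum>m\<le>n. (p * y ^ s + (1 - p)) ^ m / ((y ^ (s - 1)) ^ m * y ^ t))"
    by (simp add: sum_divide_distrib[symmetric] sum_mu_p_set_power_card_prefix)
  also have "\<dots> = (\<Sum>m\<le>n. ((p * y ^ s + (1 - p)) / y ^ (s - 1)) ^ m) / y ^ t"
    by (simp add: sum_divide_distrib power_divide)
  finally show ?thesis .
qed

lemma mu_p_shifted_le:
  fixes p y :: real
  assumes "G \<subseteq> Pow {..<n}" "shifted G" "s_wise_t_intersecting s t G" "0 < s"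
    and "0 \<le> p" "p \<le> 1" "1 \<le> y"
  shows "mu_p n p G \<le> (\<Sum>m\<le>n. ((p * y ^ s + (1 - p)) / y ^ (s - 1)) ^ m) / y ^ t"
proof (rule mu_p_le_if_dense_prefix[OF assms(1,5-7)])
  show "\<forall>A\<in>G. \<exists>m. (s - 1) * m + t \<le> s * card (A \<inter> {..<m})"
  proof
    fix A assume "A \<in> G"
    moreover from this have "finite A" using assms(1) finite_subset by blast
    ultimately show "\<exists>m. (s - 1) * m + t \<le> s * card (A \<inter> {..<m})"
      by (rule shifted_s_wise_t_intersecting_dense_prefix[OF assms(2-4)])
  qed
qed

lemma ex_geometric_sum_div_power_less:
  fixes c y \<epsilon> :: real
  assumes "0 \<le> c" "c < 1" "1 < y" "0 < \<epsilon>"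
  shows "\<exists>t. \<forall>n. (\<Sum>m\<le>n. c ^ m) / y ^ t < \<epsilon>"
proof -
  obtain t where t: "1 / (\<epsilon> * (1 - c)) < y ^ t" using real_arch_pow[OF \<open>1 < y\<close>] by blast
  have "(\<Sum>m\<le>n. c ^ m) / y ^ t < \<epsilon>" for n
  proof -
    have "(\<Sum>m\<le>n. c ^ m) \<le> 1 / (1 - c)"
      using assms(1,2) sum_le_suminf[OF summable_geometric, of c "{..n}"]
      by (simp add: suminf_geometric)
    also have "\<dots> < \<epsilon> * y ^ t" using t assms(2,4) by (simp add: field_simps)
    finally show ?thesis using \<open>1 < y\<close> by (simp add: divide_less_eq)
  qed
  then show ?thesis by blast
qed

theorem lemma2p3:
  fixes \<epsilon> p :: real and s :: nat
  assumes "\<epsilon> > 0" and "s \<ge> 2" and "0 < p" and "p < (real s - 1) / real s"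
  shows "\<exists>t::nat. \<forall>n::nat. \<forall>\<F>. \<F> \<subseteq> Pow {..<n} \<longrightarrow> s_wise_t_intersecting s t \<F>
            \<longrightarrow> mu_p n p \<F> < \<epsilon>"
proof -
  have "p * real s < real s - 1" using assms(2,4) by (simp add: field_simps)
  then have "p < 1" using mult_right_mono[of 1 p "real s"] by (cases "p < 1") auto
  obtain y where "1 < y" and gap: "p * y ^ s + (1 - p) < y ^ (s - 1)"
    using ex_power_gap[OF \<open>p * real s < real s - 1\<close>] by blast
  define c where "c = (p * y ^ s + (1 - p)) / y ^ (s - 1)"
  have "0 \<le> c" "c < 1" using gap \<open>1 < y\<close> \<open>p < 1\<close> assms(3) by (simp_all add: c_def)
  then obtain t where t: "\<forall>n. (\<Sum>m\<le>n. c ^ m) / y ^ t < \<epsilon>"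
    using ex_geometric_sum_div_power_less \<open>1 < y\<close> assms(1) by blast
  show ?thesis
  proof (intro exI[of _ t] allI impI)
    fix n \<F> assume \<F>: "\<F> \<subseteq> Pow {..<n}" "s_wise_t_intersecting s t \<F>"
    obtain G where G: "G \<subseteq> Pow {..<n}" "s_wise_t_intersecting s t G" "shifted G"
      and "mu_p n p G = mu_p n p \<F>"
      using ex_shifted_family[OF \<F>, of p] by blast
    then have "mu_p n p \<F> \<le> (\<Sum>m\<le>n. c ^ m) / y ^ t"
      using mu_p_shifted_le[OF G(1,3,2), of p y] assms(2,3) \<open>p < 1\<close> \<open>1 < y\<close>
      by (simp add: c_def)
    with t show "mu_p n p \<F> < \<epsilon>" by (meson le_less_trans)
  qed
qed

end
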